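(* Let $X$ be a random variable with values in a set $\mathcal{X}$, let $\theta=\theta(X)\in\mathbb{R}$ be a statistic of $X$, and let $L=(X_1,\dots,X_n)$ be an i.i.d. sample of $X$. Fix a batch size $m\ge 1$ and let $\hat\theta$ be an estimator of $\theta$ defined on samples of size $m$. Let $\mathcal{U}$ be the finite set (of cardinality $n^m$) of all functions $u:\{1,\dots,m\}\to\{1,\dots,n\}$, and for $u\in\mathcal U$ write $L_u=(X_{u(1)},\dots,X_{u(m)})$. Assume $\mathbb{E}_L\big(\hat\theta(L_u)^2\big)<\infty$ for every $u\in\mathcal U$. For $N\ge 1$ let $B=(U^1,\dots,U^N)$ be i.i.d. uniform on $\mathcal U$, independent of $L$, and define the bagged estimator $$\tilde\theta(L,B)=\frac1N\sum_{i=1}^N\hat\theta(L_{U^i}).$$ Let $U$ denote a random variable uniform on $\mathcal U$ independent of $L$, and let $\mathbb{E}_U,\mathrm{Var}_U$ denote expectation and variance with respect to $U$ only (with $L$ fixed). Then $$\mathrm{MSE}(\tilde\theta):=\mathbb{E}_{(L,B)}\big((\tilde\theta(L,B)-\theta)^2\big)=\frac1N F+G,$$ where $$F=\mathbb{E}_L\big(\mathrm{Var}_U(\hat\theta(L_U))\big)\ge 0,\qquad G=\mathrm{Var}_L\big(\mathbb{E}_U(\hat\theta(L_U))\big)+\big(\mathbb{E}_L(\mathbb{E}_U(\hat\theta(L_U)))-\theta\big)^2\ge 0$$ do not depend on $N$. More precisely: (1) $\mathbb{E}_{(L,B)}(\tilde\theta(L,B))=\mathbb{E}_L\big(\mathbb{E}_U(\hat\theta(L_U))\big)$;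 (2) $\mathrm{Var}_{(L,B)}(\tilde\theta(L,B))=\frac1N\mathbb{E}_L\big(\mathrm{Var}_U(\hat\theta(L_U))\big)+\mathrm{Var}_L\big(\mathbb{E}_U(\hat\theta(L_U))\big)$.
   Context: $\mathbb{E}_L,\mathrm{Var}_L$ denote expectation/variance with respect to the sample $L$, and $\mathbb{E}_{(L,B)},\mathrm{Var}_{(L,B)}$ with respect to the pair $(L,B)$. The sampling $L_U$ is uniform sampling with replacement of $m$ points from $L$. *)

theory Defs
  imports "HOL-Probability.Probability"
begin

text \<open>Sub-sample L_u = (X_{u(0)},...,X_{u(m-1)}) of a sample L indexed by {..<n};
  indices are 0-based.\<close>
definition sub_sample :: "nat \<Rightarrow> (nat \<Rightarrow> 'a) \<Rightarrow> (nat \<Rightarrow> nat) \<Rightarrow> (nat \<Rightarrow> 'a)" where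
  "sub_sample m L u = restrict (\<lambda>j. L (u j)) {..<m}"

definition var_of :: "'b measure \<Rightarrow> ('b \<Rightarrow> real) \<Rightarrow> real" where
  "var_of P f = (\<integral>x. (f x - (\<integral>y. f y \<partial>P))\<^sup>2 \<partial>P)"

definition bagged :: "nat \<Rightarrow> nat \<Rightarrow> ((nat \<Rightarrow> 'a) \<Rightarrow> real) \<Rightarrow> (nat \<Rightarrow> 'a) \<Rightarrow> (nat \<Rightarrow> nat \<Rightarrow> nat) \<Rightarrow> real" where
  "bagged m N est L B = (\<Sum>i<N. est (sub_sample m L (B i))) / real N"

end

theory Submission
  imports Defs
begin

(* Given the sample L, the bagging indices U^1, ..., U^N are i.i.d. uniform on the finite set of
   index maps, so the bagged estimator is a sample mean of N i.i.d. draws of est(L_U): its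
   conditional mean is E_U and its conditional variance is Var_U / N.  The law of total variance on
   the product of the sample space and the resampling space turns this into
   Var(bagged) = E_L(Var_U) / N + Var_L(E_U), and the bias-variance decomposition of the mean
   squared error adds the squared bias (E_L(E_U) - theta)^2. *)

lemma var_of_eq:
  fixes f :: "'a \<Rightarrow> real"
  assumes "prob_space P" "integrable P f" "integrable P (\<lambda>x. (f x)\<^sup>2)"
  shows "var_of P f = (\<integral>x. (f x)\<^sup>2 \<partial>P) - (\<integral>x. f x \<partial>P)\<^sup>2"
  unfolding var_of_def using prob_space.variance_eq[OF assms] .

lemma var_of_nonneg: "0 \<le> var_of P f"
  unfolding var_of_def by simp

lemma integral_power2_diff_eq_var_of:
  fixes f :: "'a \<Rightarrow> real"
  assumes "prob_space P" "integrable P f" "integrable P (\<lambda>x. (f x)\<^sup>2)"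
  shows "(\<integral>x. (f x - c)\<^sup>2 \<partial>P) = var_of P f + ((\<integral>x. f x \<partial>P) - c)\<^sup>2"
proof -
  interpret prob_space P by fact
  have "(\<integral>x. (f x - c)\<^sup>2 \<partial>P) = (\<integral>x. (f x)\<^sup>2 - 2 * c * f x + c\<^sup>2 \<partial>P)"
    by (simp add: power2_diff algebra_simps)
  also have "\<dots> = (\<integral>x. (f x)\<^sup>2 \<partial>P) - 2 * c * (\<integral>x. f x \<partial>P) + c\<^sup>2"
    using assms(2,3) by (simp add: prob_space)
  finally show ?thesis
    using var_of_eq[OF assms] by (simp add: power2_diff)
qed

lemma
  fixes f :: "'a \<Rightarrow> real"
  assumes "prob_space P" "i \<in> I" "integrable P f"
  shows integrable_PiM_coordinate: "integrable (PiM I (\<lambda>_. P)) (\<lambda>x. f (x i))"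
    and integral_PiM_coordinate: "(\<integral>x. f (x i) \<partial>PiM I (\<lambda>_. P)) = (\<integral>x. f x \<partial>P)"
proof -
  have distr: "distr (PiM I (\<lambda>_. P)) P (\<lambda>x. x i) = P"
    using assms(1,2) by (rule distr_PiM_component)
  have meas: "(\<lambda>x. x i) \<in> measurable (PiM I (\<lambda>_. P)) P"
    using assms(2) by (rule measurable_component_singleton)
  have "f \<in> borel_measurable P"
    using assms(3) by (rule borel_measurable_integrable)
  then show "integrable (PiM I (\<lambda>_. P)) (\<lambda>x. f (x i))"
    "(\<integral>x. f (x i) \<partial>PiM I (\<lambda>_. P)) = (\<integral>x. f x \<partial>P)"
    using assms(3) by (simp_all add: distr flip: integrable_distr_eq[OF meas] integral_distr[OF meas])
qed

lemma
  fixes f g :: "'a \<Rightarrow> real"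
  assumes "prob_space P" "finite I" "i \<in> I" "j \<in> I" "i \<noteq> j" "integrable P f" "integrable P g"
  shows integrable_PiM_two_coordinates: "integrable (PiM I (\<lambda>_. P)) (\<lambda>x. f (x i) * g (x j))"
    and integral_PiM_two_coordinates:
      "(\<integral>x. f (x i) * g (x j) \<partial>PiM I (\<lambda>_. P)) = (\<integral>x. f x \<partial>P) * (\<integral>x. g x \<partial>P)"
proof -
  interpret prob_space P by fact
  interpret product_sigma_finite "\<lambda>_. P"
    using assms(1) by (simp add: product_sigma_finite_def prob_space_imp_sigma_finite)
  define h where "h k y = (if k = i then f y else if k = j then g y else 1)" for k y
  have h_int: "integrable P (h k)" for k
    using assms(1,6,7) by (cases "k = i"; cases "k = j") (simp_all add: h_def[abs_def])
  have prod_h: "(\<Prod>k\<in>I. h k (x k)) = f (x i) * g (x j)" for x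
    using assms(2-5) by (simp add: h_def prod.If_cases Int_absorb1)
  have "integral\<^sup>L P (h k) =
      (if k = i then integral\<^sup>L P f else if k = j then integral\<^sup>L P g else 1)" for k
    by (cases "k = i"; cases "k = j") (simp_all add: h_def[abs_def] prob_space)
  then have "(\<Prod>k\<in>I. integral\<^sup>L P (h k)) = (\<integral>x. f x \<partial>P) * (\<integral>x. g x \<partial>P)"
    using assms(2-5) by (simp add: prod.If_cases Int_absorb1)
  moreover note product_integrable_prod[of I h] product_integral_prod[of I h]
  ultimately show "integrable (PiM I (\<lambda>_. P)) (\<lambda>x. f (x i) * g (x j))"
    "(\<integral>x. f (x i) * g (x j) \<partial>PiM I (\<lambda>_. P)) = (\<integral>x. f x \<partial>P) * (\<integral>x. g x \<partial>P)"
    using assms(2) h_int by (simp_all add: prod_h)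
qed

lemma integral_PiM_coordinate_products:
  fixes h :: "'a \<Rightarrow> real"
  assumes "prob_space P" "finite I" "i \<in> I" "j \<in> I"
    and "integrable P h" "integrable P (\<lambda>x. (h x)\<^sup>2)"
  shows "integrable (PiM I (\<lambda>_. P)) (\<lambda>x. h (x i) * h (x j))"
    and "(\<integral>x. h (x i) * h (x j) \<partial>PiM I (\<lambda>_. P)) =
      (\<integral>x. h x \<partial>P)\<^sup>2 + (if i = j then var_of P h else 0)"
proof -
  have "integrable (PiM I (\<lambda>_. P)) (\<lambda>x. h (x i) * h (x j)) \<and>
    (\<integral>x. h (x i) * h (x j) \<partial>PiM I (\<lambda>_. P)) =
      (\<integral>x. h x \<partial>P)\<^sup>2 + (if i = j then var_of P h else 0)"
  proof (cases "i = j")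
    case True
    then show ?thesis
      using integrable_PiM_coordinate[OF assms(1,3,6)] integral_PiM_coordinate[OF assms(1,3,6)]
        var_of_eq[OF assms(1,5,6)]
      by (simp add: power2_eq_square)
  next
    case False
    then show ?thesis
      using integrable_PiM_two_coordinates[OF assms(1-4) False assms(5,5)]
        integral_PiM_two_coordinates[OF assms(1-4) False assms(5,5)]
      by (simp add: power2_eq_square)
  qed
  then show "integrable (PiM I (\<lambda>_. P)) (\<lambda>x. h (x i) * h (x j))"
    "(\<integral>x. h (x i) * h (x j) \<partial>PiM I (\<lambda>_. P)) =
      (\<integral>x. h x \<partial>P)\<^sup>2 + (if i = j then var_of P h else 0)"
    by simp_all
qed

lemma
  fixes h :: "'a \<Rightarrow> real"
  assumes P: "prob_space P" and h: "integrable P h" "integrable P (\<lambda>x. (h x)\<^sup>2)"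
  shows integrable_PiM_sum_square: "integrable (PiM {..<N} (\<lambda>_. P)) (\<lambda>B. (\<Sum>i<N. h (B i))\<^sup>2)"
    and integral_PiM_sum_square: "(\<integral>B. (\<Sum>i<N. h (B i))\<^sup>2 \<partial>PiM {..<N} (\<lambda>_. P)) =
      (real N)\<^sup>2 * (\<integral>x. h x \<partial>P)\<^sup>2 + real N * var_of P h"
proof -
  let ?PB = "PiM {..<N} (\<lambda>_. P)"
  have square: "(\<Sum>i<N. h (B i))\<^sup>2 = (\<Sum>i<N. \<Sum>j<N. h (B i) * h (B j))" for B
    unfolding power2_eq_square by (simp add: sum_product)
  note products = integral_PiM_coordinate_products[OF P finite_lessThan _ _ h]
  show "integrable ?PB (\<lambda>B. (\<Sum>i<N. h (B i))\<^sup>2)"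
    unfolding square by (intro Bochner_Integration.integrable_sum products(1)) simp_all
  have "(\<integral>B. (\<Sum>i<N. \<Sum>j<N. h (B i) * h (B j)) \<partial>?PB) =
      (\<Sum>i<N. \<integral>B. (\<Sum>j<N. h (B i) * h (B j)) \<partial>?PB)"
    by (intro Bochner_Integration.integral_sum Bochner_Integration.integrable_sum products(1)) simp_all
  also have "\<dots> = (\<Sum>i<N. \<Sum>j<N. \<integral>B. h (B i) * h (B j) \<partial>?PB)"
    by (intro sum.cong refl Bochner_Integration.integral_sum products(1)) simp_all
  also have "\<dots> = (\<Sum>i<N. \<Sum>j<N. (\<integral>x. h x \<partial>P)\<^sup>2 + (if i = j then var_of P h else 0))"
    by (intro sum.cong refl products(2)) simp_all
  also have "\<dots> = (real N)\<^sup>2 * (\<integral>x. h x \<partial>P)\<^sup>2 + real N * var_of P h"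
    by (simp add: sum.distrib power2_eq_square algebra_simps)
  finally show "(\<integral>B. (\<Sum>i<N. h (B i))\<^sup>2 \<partial>?PB) =
      (real N)\<^sup>2 * (\<integral>x. h x \<partial>P)\<^sup>2 + real N * var_of P h"
    unfolding square .
qed

lemma
  fixes h :: "'a \<Rightarrow> real"
  assumes P: "prob_space P" and h: "integrable P h" "integrable P (\<lambda>x. (h x)\<^sup>2)"
    and N: "0 < N"
  defines "avg \<equiv> \<lambda>B. (\<Sum>i<N. h (B i)) / real N"
  shows integrable_sample_mean: "integrable (PiM {..<N} (\<lambda>_. P)) avg"
    and integrable_sample_mean_square: "integrable (PiM {..<N} (\<lambda>_. P)) (\<lambda>B. (avg B)\<^sup>2)"
    and integral_sample_mean: "(\<integral>B. avg B \<partial>PiM {..<N} (\<lambda>_. P)) = (\<integral>x. h x \<partial>P)"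
    and var_of_sample_mean: "var_of (PiM {..<N} (\<lambda>_. P)) avg = var_of P h / real N"
    and integral_sample_mean_square_le:
      "(\<integral>B. (avg B)\<^sup>2 \<partial>PiM {..<N} (\<lambda>_. P)) \<le> (\<integral>x. (h x)\<^sup>2 \<partial>P)"
proof -
  let ?PB = "PiM {..<N} (\<lambda>_. P)"
  have square: "(avg B)\<^sup>2 = (\<Sum>i<N. h (B i))\<^sup>2 / (real N)\<^sup>2" for B
    unfolding avg_def by (simp add: power_divide)
  show "integrable ?PB avg"
    unfolding avg_def by (intro integrable_divide_zero Bochner_Integration.integrable_sum
      integrable_PiM_coordinate[OF P _ h(1)]) simp
  show "integrable ?PB (\<lambda>B. (avg B)\<^sup>2)"
    unfolding square using integrable_PiM_sum_square[OF P h] by simp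
  show mean: "(\<integral>B. avg B \<partial>?PB) = (\<integral>x. h x \<partial>P)"
  proof -
    have "(\<integral>B. (\<Sum>i<N. h (B i)) \<partial>?PB) = (\<Sum>i<N. \<integral>B. h (B i) \<partial>?PB)"
      by (intro Bochner_Integration.integral_sum integrable_PiM_coordinate[OF P _ h(1)]) simp
    also have "\<dots> = (\<Sum>i<N. \<integral>x. h x \<partial>P)"
      by (rule sum.cong[OF refl]) (rule integral_PiM_coordinate[OF P _ h(1)], simp)
    finally show ?thesis
      unfolding avg_def using N by simp
  qed
  have moment2: "(\<integral>B. (avg B)\<^sup>2 \<partial>?PB) = (\<integral>x. h x \<partial>P)\<^sup>2 + var_of P h / real N"
    unfolding square using integral_PiM_sum_square[OF P h] N by (simp add: field_simps power2_eq_square)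
  then show "var_of ?PB avg = var_of P h / real N"
    using var_of_eq[OF prob_space_PiM[OF P]
        \<open>integrable ?PB avg\<close> \<open>integrable ?PB (\<lambda>B. (avg B)\<^sup>2)\<close>]
    by (simp add: mean)
  have "var_of P h / real N \<le> var_of P h"
    using N var_of_nonneg[of P h] by (simp add: divide_le_eq mult_le_cancel_left1)
  then show "(\<integral>B. (avg B)\<^sup>2 \<partial>?PB) \<le> (\<integral>x. (h x)\<^sup>2 \<partial>P)"
    using moment2 var_of_eq[OF P h] by simp
qed

lemma power2_integral_le_integral_power2:
  fixes f :: "'a \<Rightarrow> real"
  assumes "prob_space P" "integrable P f" "integrable P (\<lambda>x. (f x)\<^sup>2)"
  shows "(\<integral>x. f x \<partial>P)\<^sup>2 \<le> (\<integral>x. (f x)\<^sup>2 \<partial>P)"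
  using var_of_eq[OF assms] var_of_nonneg[of P f] by simp

lemma
  fixes f :: "'a \<times> 'b \<Rightarrow> real"
  assumes PL: "prob_space PL" and PB: "prob_space PB"
    and f: "f \<in> borel_measurable (PL \<Otimes>\<^sub>M PB)"
    and inner: "\<And>L. L \<in> space PL \<Longrightarrow> integrable PB (\<lambda>B. (f (L, B))\<^sup>2)"
    and outer: "integrable PL (\<lambda>L. \<integral>B. (f (L, B))\<^sup>2 \<partial>PB)"
  shows integrable_pair_measure_square: "integrable (PL \<Otimes>\<^sub>M PB) (\<lambda>z. (f z)\<^sup>2)"
    and integrable_pair_measure: "integrable (PL \<Otimes>\<^sub>M PB) f"
    and integrable_square_integral_snd: "integrable PL (\<lambda>L. (\<integral>B. f (L, B) \<partial>PB)\<^sup>2)"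
proof -
  interpret pair_sigma_finite PL PB
    using PL PB by (simp add: pair_sigma_finite_def prob_space_imp_sigma_finite)
  interpret PB: prob_space PB by (fact PB)
  interpret PLB: prob_space "PL \<Otimes>\<^sub>M PB"
    using PL PB by (rule prob_space_pair)
  show f2: "integrable (PL \<Otimes>\<^sub>M PB) (\<lambda>z. (f z)\<^sup>2)"
  proof (rule Fubini_integrable)
    show "(\<lambda>z. (f z)\<^sup>2) \<in> borel_measurable (PL \<Otimes>\<^sub>M PB)"
      using f by measurable
    show "integrable PL (\<lambda>L. \<integral>B. norm ((f (L, B))\<^sup>2) \<partial>PB)"
      using outer by simp
    show "AE L in PL. integrable PB (\<lambda>B. (f (L, B))\<^sup>2)"
      using inner by simp
  qed
  show "integrable (PL \<Otimes>\<^sub>M PB) f"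
    using f f2 by (rule PLB.square_integrable_imp_integrable)
  show "integrable PL (\<lambda>L. (\<integral>B. f (L, B) \<partial>PB)\<^sup>2)"
  proof (rule Bochner_Integration.integrable_bound[OF outer])
    show "(\<lambda>L. (\<integral>B. f (L, B) \<partial>PB)\<^sup>2) \<in> borel_measurable PL"
      using f by measurable
    show "AE L in PL. norm ((\<integral>B. f (L, B) \<partial>PB)\<^sup>2) \<le> norm (\<integral>B. (f (L, B))\<^sup>2 \<partial>PB)"
    proof (rule AE_I2)
      fix L assume L: "L \<in> space PL"
      have "integrable PB (\<lambda>B. f (L, B))"
        using measurable_Pair2[OF f L] inner[OF L] by (rule PB.square_integrable_imp_integrable)
      then show "norm ((\<integral>B. f (L, B) \<partial>PB)\<^sup>2) \<le> norm (\<integral>B. (f (L, B))\<^sup>2 \<partial>PB)"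
        using power2_integral_le_integral_power2[OF PB _ inner[OF L]] by simp
    qed
  qed
qed

lemma
  fixes f :: "'a \<times> 'b \<Rightarrow> real"
  assumes PL: "prob_space PL" and PB: "prob_space PB"
    and f: "f \<in> borel_measurable (PL \<Otimes>\<^sub>M PB)"
    and inner: "\<And>L. L \<in> space PL \<Longrightarrow> integrable PB (\<lambda>B. (f (L, B))\<^sup>2)"
    and outer: "integrable PL (\<lambda>L. \<integral>B. (f (L, B))\<^sup>2 \<partial>PB)"
  shows integral_pair_measure: "(\<integral>z. f z \<partial>(PL \<Otimes>\<^sub>M PB)) = (\<integral>L. (\<integral>B. f (L, B) \<partial>PB) \<partial>PL)"
    and var_of_pair_measure: "var_of (PL \<Otimes>\<^sub>M PB) f =
      (\<integral>L. var_of PB (\<lambda>B. f (L, B)) \<partial>PL) + var_of PL (\<lambda>L. \<integral>B. f (L, B) \<partial>PB)"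
proof -
  interpret pair_sigma_finite PL PB
    using PL PB by (simp add: pair_sigma_finite_def prob_space_imp_sigma_finite)
  interpret PL: prob_space PL by (fact PL)
  interpret PB: prob_space PB by (fact PB)
  note integrable = integrable_pair_measure_square[OF assms] integrable_pair_measure[OF assms]
    integrable_square_integral_snd[OF assms]
  define mean where "mean = (\<lambda>L. \<integral>B. f (L, B) \<partial>PB)"
  define moment2 where "moment2 = (\<lambda>L. \<integral>B. (f (L, B))\<^sup>2 \<partial>PB)"
  have mean_integrable: "integrable PL mean"
  proof (rule PL.square_integrable_imp_integrable)
    show "mean \<in> borel_measurable PL"
      unfolding mean_def using f by measurable
    show "integrable PL (\<lambda>L. (mean L)\<^sup>2)"
      using integrable(3) by (simp add: mean_def)
  qed
  have inner_var: "var_of PB (\<lambda>B. f (L, B)) = moment2 L - (mean L)\<^sup>2" if "L \<in> space PL" for L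
  proof -
    have "integrable PB (\<lambda>B. f (L, B))"
      using measurable_Pair2[OF f that] inner[OF that] by (rule PB.square_integrable_imp_integrable)
    then show ?thesis
      unfolding mean_def moment2_def using PB inner[OF that] by (intro var_of_eq)
  qed
  show "(\<integral>z. f z \<partial>(PL \<Otimes>\<^sub>M PB)) = (\<integral>L. (\<integral>B. f (L, B) \<partial>PB) \<partial>PL)"
    using integral_fst'[OF integrable(2)] by simp
  have "(\<integral>z. (f z)\<^sup>2 \<partial>(PL \<Otimes>\<^sub>M PB)) = (\<integral>L. moment2 L \<partial>PL)"
    unfolding moment2_def using integral_fst'[OF integrable(1)] by simp
  moreover have "(\<integral>L. var_of PB (\<lambda>B. f (L, B)) \<partial>PL) =
      (\<integral>L. moment2 L \<partial>PL) - (\<integral>L. (mean L)\<^sup>2 \<partial>PL)"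
    using inner_var outer integrable(3)
    by (simp add: mean_def moment2_def cong: Bochner_Integration.integral_cong)
  ultimately show "var_of (PL \<Otimes>\<^sub>M PB) f =
      (\<integral>L. var_of PB (\<lambda>B. f (L, B)) \<partial>PL) + var_of PL (\<lambda>L. \<integral>B. f (L, B) \<partial>PB)"
    using var_of_eq[OF prob_space_pair[OF PL PB] integrable(2,1)]
      var_of_eq[OF PL mean_integrable] integrable(3) integral_fst'[OF integrable(2)]
    by (simp add: mean_def)
qed

lemma integrable_uniform_count_measure:
  "finite A \<Longrightarrow> integrable (uniform_count_measure A) (f :: 'a \<Rightarrow> real)"
  unfolding uniform_count_measure_def by (rule integrable_point_measure_finite)

lemma measurable_sub_sample:
  assumes "u \<in> {..<m} \<rightarrow> I"
  shows "(\<lambda>L. sub_sample m L u) \<in> measurable (PiM I (\<lambda>_. M)) (PiM {..<m} (\<lambda>_. M))"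
  unfolding sub_sample_def
proof (rule measurable_restrict)
  fix j assume "j \<in> {..<m}"
  then show "(\<lambda>L. L (u j)) \<in> measurable (PiM I (\<lambda>_. M)) M"
    using assms by (intro measurable_component_singleton) auto
qed

lemma borel_measurable_resampled_mean:
  fixes g :: "'u \<Rightarrow> 'l \<Rightarrow> real"
  assumes "countable U" "sets PU = sets (count_space U)"
    and "\<And>u. u \<in> U \<Longrightarrow> g u \<in> borel_measurable PL"
  shows "(\<lambda>z. (\<Sum>i<N. g (snd z i) (fst z)) / real N) \<in> borel_measurable (PL \<Otimes>\<^sub>M PiM {..<N} (\<lambda>_. PU))"
proof -
  have "(\<lambda>z. g (snd z i) (fst z)) \<in> borel_measurable (PL \<Otimes>\<^sub>M PiM {..<N} (\<lambda>_. PU))"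
    if "i \<in> {..<N}" for i
  proof (rule measurable_compose_countable'[OF _ _ assms(1)])
    show "(\<lambda>z. g u (fst z)) \<in> borel_measurable (PL \<Otimes>\<^sub>M PiM {..<N} (\<lambda>_. PU))" if "u \<in> U" for u
      using assms(3)[OF that] by measurable
    have "(\<lambda>z. snd z i) \<in> measurable (PL \<Otimes>\<^sub>M PiM {..<N} (\<lambda>_. PU)) PU"
      using \<open>i \<in> {..<N}\<close> by measurable
    then show "(\<lambda>z. snd z i) \<in> measurable (PL \<Otimes>\<^sub>M PiM {..<N} (\<lambda>_. PU)) (count_space U)"
      using measurable_cong_sets[OF refl assms(2)] by blast
  qed
  then show ?thesis
    by measurable
qed

lemma
  fixes g :: "'u \<Rightarrow> 'l \<Rightarrow> real"
  assumes PL: "prob_space PL" and U: "finite U" "U \<noteq> {}" and N: "0 < N"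
    and g_measurable: "\<And>u. u \<in> U \<Longrightarrow> g u \<in> borel_measurable PL"
    and g_square_integrable: "\<And>u. u \<in> U \<Longrightarrow> integrable PL (\<lambda>L. (g u L)\<^sup>2)"
  defines "PU \<equiv> uniform_count_measure U"
    and "bag \<equiv> \<lambda>z. (\<Sum>i<N. g (snd z i) (fst z)) / real N"
  shows integrable_bagging_square: "integrable (PL \<Otimes>\<^sub>M PiM {..<N} (\<lambda>_. PU)) (\<lambda>z. (bag z)\<^sup>2)"
    and integrable_bagging: "integrable (PL \<Otimes>\<^sub>M PiM {..<N} (\<lambda>_. PU)) bag"
    and integral_bagging: "(\<integral>z. bag z \<partial>(PL \<Otimes>\<^sub>M PiM {..<N} (\<lambda>_. PU))) =
      (\<integral>L. (\<integral>u. g u L \<partial>PU) \<partial>PL)"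
    and var_of_bagging: "var_of (PL \<Otimes>\<^sub>M PiM {..<N} (\<lambda>_. PU)) bag =
      (\<integral>L. var_of PU (\<lambda>u. g u L) \<partial>PL) / real N + var_of PL (\<lambda>L. \<integral>u. g u L \<partial>PU)"
proof -
  let ?PB = "PiM {..<N} (\<lambda>_. PU)"
  have PU: "prob_space PU"
    unfolding PU_def using U by (rule prob_space_uniform_count_measure)
  have PB: "prob_space ?PB"
    using PU by (rule prob_space_PiM)
  have PU_integrable: "integrable PU f" for f :: "'u \<Rightarrow> real"
    unfolding PU_def using U(1) by (rule integrable_uniform_count_measure)
  have bag_measurable: "bag \<in> borel_measurable (PL \<Otimes>\<^sub>M ?PB)"
    unfolding bag_def PU_def using countable_finite[OF U(1)] sets_uniform_count_measure_count_space
    by (rule borel_measurable_resampled_mean) (rule g_measurable)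
  have bag_pair: "bag (L, B) = (\<Sum>i<N. g (B i) L) / real N" for L B
    by (simp add: bag_def)
  note sample_mean = integrable_sample_mean_square[OF PU PU_integrable PU_integrable N]
    integral_sample_mean[OF PU PU_integrable PU_integrable N]
    var_of_sample_mean[OF PU PU_integrable PU_integrable N]
    integral_sample_mean_square_le[OF PU PU_integrable PU_integrable N]
  have inner_mean: "(\<integral>B. bag (L, B) \<partial>?PB) = (\<integral>u. g u L \<partial>PU)"
    and inner_var: "var_of ?PB (\<lambda>B. bag (L, B)) = var_of PU (\<lambda>u. g u L) / real N"
    and inner_square_integrable: "integrable ?PB (\<lambda>B. (bag (L, B))\<^sup>2)"
    and inner_moment2: "(\<integral>B. (bag (L, B))\<^sup>2 \<partial>?PB) \<le> (\<integral>u. (g u L)\<^sup>2 \<partial>PU)" for L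
    unfolding bag_pair by (fact sample_mean)+
  have outer: "integrable PL (\<lambda>L. \<integral>B. (bag (L, B))\<^sup>2 \<partial>?PB)"
  proof (rule Bochner_Integration.integrable_bound)
    show "integrable PL (\<lambda>L. \<integral>u. (g u L)\<^sup>2 \<partial>PU)"
      unfolding PU_def integral_uniform_count_measure[OF U(1)]
      using g_square_integrable by simp
    show "(\<lambda>L. \<integral>B. (bag (L, B))\<^sup>2 \<partial>?PB) \<in> borel_measurable PL"
      using bag_measurable
      by (intro sigma_finite_measure.borel_measurable_lebesgue_integral[OF prob_space_imp_sigma_finite[OF PB]])
        (simp add: case_prod_unfold)
    show "AE L in PL. norm (\<integral>B. (bag (L, B))\<^sup>2 \<partial>?PB) \<le> norm (\<integral>u. (g u L)\<^sup>2 \<partial>PU)"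
      using inner_moment2 by simp
  qed
  note bag_moments = PL PB bag_measurable inner_square_integrable outer
  note total = integrable_pair_measure_square[OF bag_moments] integrable_pair_measure[OF bag_moments]
    integral_pair_measure[OF bag_moments] var_of_pair_measure[OF bag_moments]
  show "integrable (PL \<Otimes>\<^sub>M ?PB) (\<lambda>z. (bag z)\<^sup>2)" "integrable (PL \<Otimes>\<^sub>M ?PB) bag"
    using total by simp_all
  show "(\<integral>z. bag z \<partial>(PL \<Otimes>\<^sub>M ?PB)) = (\<integral>L. (\<integral>u. g u L \<partial>PU) \<partial>PL)"
    using total by (simp add: inner_mean)
  show "var_of (PL \<Otimes>\<^sub>M ?PB) bag =
      (\<integral>L. var_of PU (\<lambda>u. g u L) \<partial>PL) / real N + var_of PL (\<lambda>L. \<integral>u. g u L \<partial>PU)"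
    using total by (simp add: inner_mean inner_var)
qed

theorem theorem1:
  fixes M :: "'a measure" and \<theta> :: real and est :: "(nat \<Rightarrow> 'a) \<Rightarrow> real"
    and n m N :: nat
  assumes "prob_space M"
    and "n \<ge> 1" and "m \<ge> 1" and "N \<ge> 1"
    and "est \<in> borel_measurable (PiM {..<m} (\<lambda>_. M))"
    and "\<forall>u \<in> {..<m} \<rightarrow>\<^sub>E {..<n}.
           integrable (PiM {..<n} (\<lambda>_. M)) (\<lambda>L. (est (sub_sample m L u))\<^sup>2)"
  defines "\<U> \<equiv> {..<m} \<rightarrow>\<^sub>E {..<n}"
    and "PL \<equiv> PiM {..<n} (\<lambda>_. M)"
    and "PU \<equiv> uniform_count_measure ({..<m} \<rightarrow>\<^sub>E {..<n})"
  defines "PLB \<equiv> PL \<Otimes>\<^sub>M PiM {..<N} (\<lambda>_. PU)"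
    and "EU \<equiv> (\<lambda>L. \<integral>u. est (sub_sample m L u) \<partial>PU)"
    and "VU \<equiv> (\<lambda>L. var_of PU (\<lambda>u. est (sub_sample m L u)))"
    and "bag \<equiv> (\<lambda>z. bagged m N est (fst z) (snd z))"
  defines "F \<equiv> (\<integral>L. VU L \<partial>PL)"
    and "G \<equiv> var_of PL EU + ((\<integral>L. EU L \<partial>PL) - \<theta>)\<^sup>2"
  shows "(\<integral>z. (bag z - \<theta>)\<^sup>2 \<partial>PLB) = F / real N + G
         \<and> F \<ge> 0 \<and> G \<ge> 0
         \<and> (\<integral>z. bag z \<partial>PLB) = (\<integral>L. EU L \<partial>PL)
         \<and> var_of PLB bag = F / real N + var_of PL EU"
proof -
  let ?g = "\<lambda>u L. est (sub_sample m L u)"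
  have PL: "prob_space PL"
    unfolding PL_def using assms(1) by (rule prob_space_PiM)
  have U: "finite \<U>" "\<U> \<noteq> {}"
    unfolding \<U>_def using assms(2) by (auto simp: finite_PiE PiE_eq_empty_iff lessThan_empty_iff)
  have N: "0 < N"
    using assms(4) by simp
  have g_measurable: "?g u \<in> borel_measurable PL" if "u \<in> \<U>" for u
    using that unfolding PL_def \<U>_def
    by (intro measurable_compose[OF measurable_sub_sample assms(5)]) (auto simp: PiE_iff)
  have g_square_integrable: "integrable PL (\<lambda>L. (?g u L)\<^sup>2)" if "u \<in> \<U>" for u
    using assms(6) that unfolding \<U>_def PL_def by blast
  have bag: "bag = (\<lambda>z. (\<Sum>i<N. ?g (snd z i) (fst z)) / real N)"
    unfolding bag_def bagged_def by simp
  have bagging: "integrable PLB (\<lambda>z. (bag z)\<^sup>2)" "integrable PLB bag"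
    "(\<integral>z. bag z \<partial>PLB) = (\<integral>L. EU L \<partial>PL)" "var_of PLB bag = F / real N + var_of PL EU"
    unfolding bag PLB_def PU_def EU_def F_def VU_def \<U>_def[symmetric]
    using g_measurable g_square_integrable
    by (intro integrable_bagging_square[OF PL U N] integrable_bagging[OF PL U N]
      integral_bagging[OF PL U N] var_of_bagging[OF PL U N]; simp)+
  have PLB: "prob_space PLB"
    unfolding PLB_def PU_def \<U>_def[symmetric]
    using PL prob_space_PiM[OF prob_space_uniform_count_measure[OF U]] by (rule prob_space_pair)
  have "(\<integral>z. (bag z - \<theta>)\<^sup>2 \<partial>PLB) = var_of PLB bag + ((\<integral>z. bag z \<partial>PLB) - \<theta>)\<^sup>2"
    using PLB bagging(2,1) by (rule integral_power2_diff_eq_var_of)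
  moreover have "F \<ge> 0"
    unfolding F_def VU_def by (simp add: var_of_nonneg)
  moreover have "G \<ge> 0"
    unfolding G_def by (simp add: var_of_nonneg)
  ultimately show ?thesis
    using bagging(3,4) unfolding G_def by simp
qed

end
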